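(* Let $X$ be a non-empty set and $A$ a non-empty subset of $X$. Then $$|\operatorname{Reg}(\mathcal T_X(A))|=\sum_{\mu=1}^{|A|}\mu!\,\mu^{|X\setminus A|}\,S(|A|,\mu)\binom{|A|}{\mu},$$ where the sum ranges over cardinals $\mu$ with $1\le\mu\le|A|$ (cardinal arithmetic).
   Context: $\mathcal T_X(A)=\{f:X\to X \mid \operatorname{im}(f)\subseteq A\}$ under composition; $\operatorname{Reg}(T)$ is the set of regular elements of $T$. For cardinals $\nu\le\mu$: $\mu!$ is the number of permutations of a set of size $\mu$; $\binom{\mu}{\nu}$ is the number of subsets of size $\nu$ of a set of size $\mu$; $S(\mu,\nu)$ is the number of equivalence relations with exactly $\nu$ classes on a set of size $\mu$. *)

theory Defs
  imports Main "HOL-Library.Equipollence" "HOL-Library.FuncSet" "HOL-Combinatorics.Permutations"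
begin

text \<open>The semigroup T_X(A): maps X -> X with image in A, represented as extensional
  functions on X (undefined outside X), under composition restricted to X.\<close>
definition TXA :: "'a set \<Rightarrow> 'a set \<Rightarrow> ('a \<Rightarrow> 'a) set" where
  "TXA X A = (X \<rightarrow>\<^sub>E A)"

definition Tcomp :: "'a set \<Rightarrow> ('a \<Rightarrow> 'a) \<Rightarrow> ('a \<Rightarrow> 'a) \<Rightarrow> ('a \<Rightarrow> 'a)" where
  "Tcomp X f g = compose X f g"

definition Reg :: "'s set \<Rightarrow> ('s \<Rightarrow> 's \<Rightarrow> 's) \<Rightarrow> 's set" where
  "Reg S mul = {a \<in> S. \<exists>x \<in> S. mul (mul a x) a = a}"

text \<open>Cardinals mu with 1 <= mu <= |A|, represented as equipollence classes of
  non-empty subsets of A.\<close>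
definition cards_upto :: "'a set \<Rightarrow> 'a set set set" where
  "cards_upto A = {B. B \<subseteq> A \<and> B \<noteq> {}} // {(B, C). B \<approx> C}"

text \<open>Sets witnessing the cardinals mu!, mu^|X-A|, S(|A|,mu), binom(|A|,mu),
  where mu = |B|.\<close>
definition perms_of :: "'a set \<Rightarrow> ('a \<Rightarrow> 'a) set" where
  "perms_of B = {f. f permutes B}"

definition eqrels_with_classes :: "'a set \<Rightarrow> 'a set \<Rightarrow> ('a \<times> 'a) set set" where
  "eqrels_with_classes A B = {r. equiv A r \<and> A // r \<approx> B}"

definition subsets_of_size :: "'a set \<Rightarrow> 'a set \<Rightarrow> 'a set set" where
  "subsets_of_size A B = {C. C \<subseteq> A \<and> C \<approx> B}"

definition summand :: "'a set \<Rightarrow> 'a set \<Rightarrow> 'a set \<Rightarrow>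
    (('a \<Rightarrow> 'a) \<times> ('a \<Rightarrow> 'a) \<times> ('a \<times> 'a) set \<times> 'a set) set" where
  "summand X A B = perms_of B \<times> ((X - A) \<rightarrow>\<^sub>E B) \<times> eqrels_with_classes A B \<times> subsets_of_size A B"

text \<open>The cardinal sum over all cardinals 1 <= mu <= |A| (disjoint union), choosing a
  representative subset B of A for each cardinal.\<close>
definition reg_count_set where
  "reg_count_set X A = Sigma (cards_upto A) (\<lambda>c. summand X A (SOME B. B \<in> c))"

end

theory Submission
  imports Defs
begin

text \<open>A map \<open>f \<in> T\<^sub>X(A)\<close> is regular iff \<open>f(X) = f(A)\<close>: then any \<open>x\<close> sending each point of
  \<open>f(A)\<close> to one of its preimages in \<open>A\<close> satisfies \<open>f x f = f\<close>. Such an \<open>f\<close> is determined by its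
  image \<open>C \<subseteq> A\<close>, its restriction to \<open>A\<close> (a surjection \<open>A \<rightarrow> C\<close>) and its restriction to
  \<open>X - A\<close> (an arbitrary map into \<open>C\<close>). A surjection \<open>A \<rightarrow> C\<close> amounts to its kernel, an
  equivalence on \<open>A\<close> with \<open>|C|\<close> classes, together with a bijection from the quotient onto \<open>C\<close>,
  i.e.\ a permutation of a set of size \<open>|C|\<close>. Grouping the images \<open>C\<close> by their cardinality \<open>\<mu>\<close>
  yields the summands \<open>\<mu>! \<mu>\<^bsup>|X - A|\<^esup> S(|A|,\<mu>) (|A| choose \<mu>)\<close>.\<close>

definition surjections :: "'a set \<Rightarrow> 'b set \<Rightarrow> ('a \<Rightarrow> 'b) set" where
  "surjections A B = {g \<in> A \<rightarrow>\<^sub>E B. g ` A = B}"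

definition bijections :: "'a set \<Rightarrow> 'b set \<Rightarrow> ('a \<Rightarrow> 'b) set" where
  "bijections A B = {g \<in> A \<rightarrow>\<^sub>E B. bij_betw g A B}"

lemma compose_compose_eq_iff:
  assumes a: "a \<in> X \<rightarrow>\<^sub>E A" and "A \<subseteq> X"
  shows "compose X (compose X a x) a = a \<longleftrightarrow> (\<forall>y\<in>X. a (x (a y)) = a y)"
proof -
  have aX: "a y \<in> X" if "y \<in> X" for y using a that assms(2) by auto
  have "compose X (compose X a x) a = a \<longleftrightarrow> (\<forall>y\<in>X. compose X (compose X a x) a y = a y)"
    using a by (auto intro!: extensionalityI[of _ X] simp: PiE_iff)
  also have "\<dots> \<longleftrightarrow> (\<forall>y\<in>X. a (x (a y)) = a y)" by (simp add: compose_eq aX)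
  finally show ?thesis .
qed

lemma regular_iff_image_eq:
  assumes "A \<subseteq> X" and "A \<noteq> {}" and a: "a \<in> X \<rightarrow>\<^sub>E A"
  shows "(\<exists>x\<in>X \<rightarrow>\<^sub>E A. \<forall>y\<in>X. a (x (a y)) = a y) \<longleftrightarrow> a ` X = a ` A"
proof
  assume "\<exists>x\<in>X \<rightarrow>\<^sub>E A. \<forall>y\<in>X. a (x (a y)) = a y"
  then obtain x where x: "x \<in> X \<rightarrow>\<^sub>E A" and inv: "\<forall>y\<in>X. a (x (a y)) = a y" by blast
  have "a y \<in> a ` A" if "y \<in> X" for y
    using inv that x a assms(1) by (metis PiE_mem image_eqI subsetD)
  then show "a ` X = a ` A" using assms(1) by auto
next
  assume im: "a ` X = a ` A"
  obtain z where z: "z \<in> A" using assms(2) by blast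
  define x where "x = (\<lambda>w\<in>X. if w \<in> a ` A then inv_into A a w else z)"
  have "x \<in> X \<rightarrow>\<^sub>E A" using z by (auto simp: x_def inv_into_into)
  moreover have "a (x (a y)) = a y" if "y \<in> X" for y
  proof -
    have "a y \<in> a ` A" using im that by blast
    moreover have "a y \<in> X" using a that assms(1) by auto
    ultimately show ?thesis by (simp add: x_def f_inv_into_f)
  qed
  ultimately show "\<exists>x\<in>X \<rightarrow>\<^sub>E A. \<forall>y\<in>X. a (x (a y)) = a y" by blast
qed

lemma Reg_TXA_eq:
  assumes "A \<subseteq> X" and "A \<noteq> {}"
  shows "Reg (TXA X A) (Tcomp X) = {f \<in> X \<rightarrow>\<^sub>E A. f ` X = f ` A}"
  unfolding Reg_def TXA_def Tcomp_def
proof (rule Collect_cong)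
  fix a
  show "(a \<in> X \<rightarrow>\<^sub>E A \<and> (\<exists>x\<in>X \<rightarrow>\<^sub>E A. compose X (compose X a x) a = a))
      \<longleftrightarrow> (a \<in> X \<rightarrow>\<^sub>E A \<and> a ` X = a ` A)"
  proof (cases "a \<in> X \<rightarrow>\<^sub>E A")
    case True
    then have "(\<exists>x\<in>X \<rightarrow>\<^sub>E A. compose X (compose X a x) a = a)
        \<longleftrightarrow> (\<exists>x\<in>X \<rightarrow>\<^sub>E A. \<forall>y\<in>X. a (x (a y)) = a y)"
      by (simp add: compose_compose_eq_iff[OF True assms(1)])
    with regular_iff_image_eq[OF assms True] show ?thesis by simp
  qed simp
qed

lemma image_eq_maps_eqpoll_Sigma_surjections:
  assumes AX: "A \<subseteq> X" and "A \<noteq> {}"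
  shows "{f \<in> X \<rightarrow>\<^sub>E A. f ` X = f ` A}
    \<approx> Sigma {C. C \<subseteq> A \<and> C \<noteq> {}} (\<lambda>C. surjections A C \<times> (X - A \<rightarrow>\<^sub>E C))"
proof -
  let ?split = "\<lambda>f. (f ` A, restrict f A, restrict f (X - A))"
  let ?glue = "\<lambda>g h. \<lambda>x\<in>X. if x \<in> A then g x else h x"
  let ?R = "{f \<in> X \<rightarrow>\<^sub>E A. f ` X = f ` A}"
  let ?S = "Sigma {C. C \<subseteq> A \<and> C \<noteq> {}} (\<lambda>C. surjections A C \<times> (X - A \<rightarrow>\<^sub>E C))"
  have "bij_betw ?split ?R ?S"
  proof (rule bij_betw_byWitness[where f'="\<lambda>(C, g, h). ?glue g h"])
    show "\<forall>f\<in>?R. (\<lambda>(C, g, h). ?glue g h) (?split f) = f"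
      by (auto simp: fun_eq_iff PiE_def extensional_def)
    show "\<forall>p\<in>?S. ?split ((\<lambda>(C, g, h). ?glue g h) p) = p"
    proof
      fix p assume "p \<in> ?S"
      then obtain C g h where p: "p = (C, g, h)"
        and g: "g \<in> A \<rightarrow>\<^sub>E C" "g ` A = C" and h: "h \<in> X - A \<rightarrow>\<^sub>E C"
        by (auto simp: surjections_def)
      have "?glue g h ` A = C" using g AX by auto
      moreover have "restrict (?glue g h) A = g" using g(1) AX
        by (auto simp: fun_eq_iff PiE_def extensional_def)
      moreover have "restrict (?glue g h) (X - A) = h" using h
        by (auto simp: fun_eq_iff PiE_def extensional_def)
      ultimately show "?split ((\<lambda>(C, g, h). ?glue g h) p) = p" by (simp add: p)
    qed
    show "?split ` ?R \<subseteq> ?S"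
    proof (rule image_subsetI)
      fix f assume "f \<in> ?R"
      then have "f ` A \<subseteq> A" "restrict f (X - A) \<in> X - A \<rightarrow>\<^sub>E f ` A" using AX by auto
      then show "?split f \<in> ?S" using assms(2) by (simp add: surjections_def)
    qed
    show "(\<lambda>(C, g, h). ?glue g h) ` ?S \<subseteq> ?R"
    proof (rule image_subsetI)
      fix p assume "p \<in> ?S"
      then obtain C g h where p: "p = (C, g, h)" and C: "C \<subseteq> A"
        and g: "g \<in> surjections A C" and h: "h \<in> X - A \<rightarrow>\<^sub>E C" by blast
      have image_A: "?glue g h ` A = C" using g AX by (auto simp: surjections_def)
      have image_X: "?glue g h ` X \<subseteq> C" using g h by (auto simp: surjections_def)
      then have "\<forall>x\<in>X. ?glue g h x \<in> A" using C by blast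
      then have "?glue g h \<in> X \<rightarrow>\<^sub>E A" by (simp add: restrict_PiE_iff)
      moreover have "?glue g h ` X = ?glue g h ` A" using image_A image_X AX by auto
      ultimately show "(\<lambda>(C, g, h). ?glue g h) p \<in> ?R" by (simp add: p)
    qed
  qed
  then show ?thesis unfolding eqpoll_def by blast
qed

lemma bij_betw_Collect:
  assumes "bij_betw f A B" and "\<And>x. x \<in> A \<Longrightarrow> P x \<longleftrightarrow> Q (f x)"
  shows "bij_betw f {x \<in> A. P x} {y \<in> B. Q y}"
  using assms by (auto simp: bij_betw_def inj_on_def image_iff)

lemma bij_betw_postcomp_PiE:
  assumes k: "bij_betw k C B"
  shows "bij_betw (\<lambda>\<phi>. restrict (k \<circ> \<phi>) Y) (Y \<rightarrow>\<^sub>E C) (Y \<rightarrow>\<^sub>E B)"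
proof (rule bij_betw_byWitness[where f'="\<lambda>\<psi>. restrict (inv_into C k \<circ> \<psi>) Y"])
  show "\<forall>\<phi>\<in>Y \<rightarrow>\<^sub>E C. restrict (inv_into C k \<circ> restrict (k \<circ> \<phi>) Y) Y = \<phi>"
    using k by (auto simp: fun_eq_iff bij_betw_inv_into_left PiE_def extensional_def Pi_def)
  show "\<forall>\<psi>\<in>Y \<rightarrow>\<^sub>E B. restrict (k \<circ> restrict (inv_into C k \<circ> \<psi>) Y) Y = \<psi>"
    using k by (auto simp: fun_eq_iff bij_betw_inv_into_right PiE_def extensional_def Pi_def)
qed (auto intro!: bij_betw_apply[OF k] bij_betw_apply[OF bij_betw_inv_into[OF k]])

lemma bij_betw_precomp_PiE:
  assumes h: "bij_betw h D' D"
  shows "bij_betw (\<lambda>\<phi>. restrict (\<phi> \<circ> h) D') (D \<rightarrow>\<^sub>E B) (D' \<rightarrow>\<^sub>E B)"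
proof (rule bij_betw_byWitness[where f'="\<lambda>\<psi>. restrict (\<psi> \<circ> inv_into D' h) D"])
  show "\<forall>\<phi>\<in>D \<rightarrow>\<^sub>E B. restrict (restrict (\<phi> \<circ> h) D' \<circ> inv_into D' h) D = \<phi>"
    using h by (auto simp: fun_eq_iff bij_betw_inv_into_right bij_betw_apply[OF bij_betw_inv_into]
        PiE_def extensional_def)
  show "\<forall>\<psi>\<in>D' \<rightarrow>\<^sub>E B. restrict (restrict (\<psi> \<circ> inv_into D' h) D \<circ> h) D' = \<psi>"
    using h by (auto simp: fun_eq_iff bij_betw_inv_into_left bij_betwE PiE_def extensional_def)
qed (auto intro!: bij_betw_apply[OF h] bij_betw_apply[OF bij_betw_inv_into[OF h]])

lemma PiE_eqpoll_cod: "C \<approx> B \<Longrightarrow> (Y \<rightarrow>\<^sub>E C) \<approx> (Y \<rightarrow>\<^sub>E B)"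
  unfolding eqpoll_def by (auto intro: bij_betw_postcomp_PiE)

lemma surjections_eqpoll_cod:
  assumes "C \<approx> B"
  shows "surjections Y C \<approx> surjections Y B"
proof -
  obtain k where k: "bij_betw k C B" using assms by (auto simp: eqpoll_def)
  have surj_iff: "\<phi> ` Y = C \<longleftrightarrow> restrict (k \<circ> \<phi>) Y ` Y = B" if "\<phi> \<in> Y \<rightarrow>\<^sub>E C" for \<phi>
  proof -
    have "\<phi> ` Y \<subseteq> C" using that by auto
    then have "\<phi> ` Y = C \<longleftrightarrow> k ` (\<phi> ` Y) = k ` C"
      by (simp add: inj_on_image_eq_iff[OF bij_betw_imp_inj_on[OF k]])
    moreover have "restrict (k \<circ> \<phi>) Y ` Y = k ` (\<phi> ` Y)" by auto
    ultimately show ?thesis using k by (simp add: bij_betw_def)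
  qed
  show ?thesis unfolding surjections_def eqpoll_def
    using bij_betw_Collect[OF bij_betw_postcomp_PiE[OF k], where P="\<lambda>\<phi>. \<phi> ` Y = C"
        and Q="\<lambda>\<psi>. \<psi> ` Y = B"] surj_iff by blast
qed

lemma bijections_eqpoll_dom:
  assumes "D' \<approx> D"
  shows "bijections D B \<approx> bijections D' B"
proof -
  obtain h where h: "bij_betw h D' D" using assms by (auto simp: eqpoll_def)
  have bij_iff: "bij_betw \<phi> D B \<longleftrightarrow> bij_betw (restrict (\<phi> \<circ> h) D') D' B" for \<phi>
    using bij_betw_comp_iff[OF h] by simp
  show ?thesis unfolding bijections_def eqpoll_def
    using bij_betw_Collect[OF bij_betw_precomp_PiE[OF h], where P="\<lambda>\<phi>. bij_betw \<phi> D B"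
        and Q="\<lambda>\<psi>. bij_betw \<psi> D' B"] bij_iff by blast
qed

lemma bijections_self_eqpoll_perms: "bijections B B \<approx> perms_of B"
  unfolding eqpoll_def
proof (intro exI bij_betw_byWitness[where f'="\<lambda>\<sigma>. restrict \<sigma> B"])
  let ?extend = "\<lambda>\<phi> x. if x \<in> B then \<phi> x else x"
  show "\<forall>\<phi>\<in>bijections B B. restrict (?extend \<phi>) B = \<phi>"
    by (auto simp: bijections_def fun_eq_iff PiE_def extensional_def)
  show "\<forall>\<sigma>\<in>perms_of B. ?extend (restrict \<sigma> B) = \<sigma>"
    by (auto simp: perms_of_def fun_eq_iff permutes_not_in)
  show "?extend ` bijections B B \<subseteq> perms_of B"
  proof clarify
    fix \<phi> assume "\<phi> \<in> bijections B B"
    then have "bij_betw (?extend \<phi>) B B"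
      using bij_betw_cong[of B \<phi> "?extend \<phi>"] by (simp add: bijections_def)
    then show "?extend \<phi> \<in> perms_of B" unfolding perms_of_def by (simp add: bij_imp_permutes)
  qed
  show "(\<lambda>\<sigma>. restrict \<sigma> B) ` perms_of B \<subseteq> bijections B B"
  proof clarify
    fix \<sigma> assume "\<sigma> \<in> perms_of B"
    then have "bij_betw \<sigma> B B" by (simp add: perms_of_def permutes_imp_bij)
    then show "restrict \<sigma> B \<in> bijections B B"
      by (simp add: bijections_def bij_betw_imp_funcset)
  qed
qed

lemma bijections_eqpoll_perms: "D \<approx> B \<Longrightarrow> bijections D B \<approx> perms_of B"
  using bijections_eqpoll_dom[OF eqpoll_sym] bijections_self_eqpoll_perms by (rule eqpoll_trans)

definition ker_on :: "'a set \<Rightarrow> ('a \<Rightarrow> 'b) \<Rightarrow> ('a \<times> 'a) set" where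
  "ker_on A g = {(x, y) \<in> A \<times> A. g x = g y}"

definition induced_map :: "'a set \<Rightarrow> ('a \<Rightarrow> 'b) \<Rightarrow> 'a set \<Rightarrow> 'b" where
  "induced_map A g = (\<lambda>Q \<in> A // ker_on A g. the_elem (g ` Q))"

definition quotient_lift :: "'a set \<Rightarrow> ('a \<times> 'a) set \<Rightarrow> ('a set \<Rightarrow> 'b) \<Rightarrow> 'a \<Rightarrow> 'b" where
  "quotient_lift A r \<phi> = (\<lambda>x \<in> A. \<phi> (r `` {x}))"

lemma equiv_ker_on: "equiv A (ker_on A g)"
  by (auto simp: ker_on_def equiv_def refl_on_def sym_def trans_def)

lemma ker_on_Image: "x \<in> A \<Longrightarrow> ker_on A g `` {x} = {y \<in> A. g y = g x}"
  by (auto simp: ker_on_def)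

lemma induced_map_class: "x \<in> A \<Longrightarrow> induced_map A g (ker_on A g `` {x}) = g x"
proof -
  assume x: "x \<in> A"
  then have "g ` (ker_on A g `` {x}) = {g x}" by (auto simp: ker_on_Image)
  then show ?thesis using x by (simp add: induced_map_def quotientI)
qed

lemma bij_betw_induced_map: "bij_betw (induced_map A g) (A // ker_on A g) (g ` A)"
proof (rule bij_betw_imageI)
  show "inj_on (induced_map A g) (A // ker_on A g)"
  proof (rule inj_onI)
    fix P Q assume "P \<in> A // ker_on A g" "Q \<in> A // ker_on A g"
      and eq: "induced_map A g P = induced_map A g Q"
    then obtain x y where "x \<in> A" "P = ker_on A g `` {x}" "y \<in> A" "Q = ker_on A g `` {y}"
      by (auto elim!: quotientE)
    moreover from this eq have "g x = g y" by (simp add: induced_map_class)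
    ultimately show "P = Q" by (simp add: ker_on_Image)
  qed
  show "induced_map A g ` (A // ker_on A g) = g ` A"
    unfolding quotient_def UNION_singleton_eq_range image_image
    by (simp add: induced_map_class cong: image_cong)
qed

lemma quotient_lift_induced_map:
  "g \<in> extensional A \<Longrightarrow> quotient_lift A (ker_on A g) (induced_map A g) = g"
  by (auto simp: quotient_lift_def fun_eq_iff induced_map_class extensional_def)

lemma image_quotient_lift: "quotient_lift A r \<phi> ` A = \<phi> ` (A // r)"
  by (auto simp: quotient_lift_def quotient_def)

lemma ker_on_quotient_lift:
  assumes "equiv A r" and "inj_on \<phi> (A // r)"
  shows "ker_on A (quotient_lift A r \<phi>) = r"
proof -
  have "(x, y) \<in> r \<longleftrightarrow> \<phi> (r `` {x}) = \<phi> (r `` {y})" if "x \<in> A" "y \<in> A" for x y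
    using assms that by (simp add: inj_on_eq_iff quotientI eq_equiv_class_iff)
  then show ?thesis
    using equiv_type[OF assms(1)] by (auto simp: ker_on_def quotient_lift_def)
qed

lemma induced_map_quotient_lift:
  assumes r: "equiv A r" and \<phi>: "inj_on \<phi> (A // r)" "\<phi> \<in> extensional (A // r)"
  shows "induced_map A (quotient_lift A r \<phi>) = \<phi>"
proof
  fix Q
  show "induced_map A (quotient_lift A r \<phi>) Q = \<phi> Q"
  proof (cases "Q \<in> A // r")
    case True
    then obtain x where x: "x \<in> A" "Q = r `` {x}" by (auto elim: quotientE)
    then have "induced_map A (quotient_lift A r \<phi>) Q = quotient_lift A r \<phi> x"
      using induced_map_class[of x A "quotient_lift A r \<phi>"]
      by (simp add: ker_on_quotient_lift[OF r \<phi>(1)])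
    with x show ?thesis by (simp add: quotient_lift_def)
  next
    case False
    with \<phi>(2) show ?thesis
      by (simp add: induced_map_def ker_on_quotient_lift[OF r \<phi>(1)] extensional_def)
  qed
qed

lemma surjections_eqpoll_Sigma_bijections:
  "surjections A B \<approx> Sigma (eqrels_with_classes A B) (\<lambda>r. bijections (A // r) B)"
proof -
  let ?decompose = "\<lambda>g. (ker_on A g, induced_map A g)"
  let ?lift = "\<lambda>(r, \<phi>). quotient_lift A r \<phi>"
  let ?S = "Sigma (eqrels_with_classes A B) (\<lambda>r. bijections (A // r) B)"
  have "bij_betw ?decompose (surjections A B) ?S"
  proof (rule bij_betw_byWitness[where f'="?lift"])
    show "\<forall>g\<in>surjections A B. ?lift (?decompose g) = g"
      by (auto simp: surjections_def PiE_def quotient_lift_induced_map)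
    show "\<forall>p\<in>?S. ?decompose (?lift p) = p"
      by (auto simp: eqrels_with_classes_def bijections_def bij_betw_def PiE_def
          ker_on_quotient_lift induced_map_quotient_lift)
    show "?decompose ` surjections A B \<subseteq> ?S"
    proof (rule image_subsetI)
      fix g assume "g \<in> surjections A B"
      then have bij: "bij_betw (induced_map A g) (A // ker_on A g) B"
        using bij_betw_induced_map[of A g] by (auto simp: surjections_def)
      then have "induced_map A g \<in> bijections (A // ker_on A g) B"
        by (simp add: bijections_def induced_map_def bij_betw_imp_funcset)
      moreover have "ker_on A g \<in> eqrels_with_classes A B"
        using bij equiv_ker_on by (auto simp: eqrels_with_classes_def eqpoll_def)
      ultimately show "?decompose g \<in> ?S" by simp
    qed
    show "?lift ` ?S \<subseteq> surjections A B"
    proof (rule image_subsetI)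
      fix p assume "p \<in> ?S"
      then obtain r \<phi> where p: "p = (r, \<phi>)" and "\<phi> \<in> bijections (A // r) B" by blast
      then have "quotient_lift A r \<phi> ` A = B"
        by (simp add: image_quotient_lift bijections_def bij_betw_def)
      then show "?lift p \<in> surjections A B"
        by (auto simp: p surjections_def quotient_lift_def)
    qed
  qed
  then show ?thesis unfolding eqpoll_def by blast
qed

lemma surjections_eqpoll_perms_times_eqrels:
  assumes "C \<approx> B"
  shows "surjections A C \<approx> perms_of B \<times> eqrels_with_classes A B"
proof -
  have "surjections A C \<approx> surjections A B" using assms by (rule surjections_eqpoll_cod)
  also have "\<dots> \<approx> Sigma (eqrels_with_classes A B) (\<lambda>r. bijections (A // r) B)"
    by (rule surjections_eqpoll_Sigma_bijections)
  also have "\<dots> \<approx> eqrels_with_classes A B \<times> perms_of B"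
    by (rule Sigma_eqpoll_cong[where h=id])
      (auto simp: eqrels_with_classes_def intro: bijections_eqpoll_perms)
  also have "\<dots> \<approx> perms_of B \<times> eqrels_with_classes A B" by (rule times_commute_eqpoll)
  finally show ?thesis .
qed

lemma Sigma_subsets_of_size_eqpoll_summand:
  "Sigma (subsets_of_size A B) (\<lambda>C. surjections A C \<times> (X - A \<rightarrow>\<^sub>E C)) \<approx> summand X A B"
proof -
  have "Sigma (subsets_of_size A B) (\<lambda>C. surjections A C \<times> (X - A \<rightarrow>\<^sub>E C))
      \<approx> subsets_of_size A B \<times> ((perms_of B \<times> eqrels_with_classes A B) \<times> (X - A \<rightarrow>\<^sub>E B))"
    by (rule Sigma_eqpoll_cong[where h=id])
      (auto simp: subsets_of_size_def intro!: times_eqpoll_cong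
        surjections_eqpoll_perms_times_eqrels PiE_eqpoll_cod)
  also have "\<dots> \<approx> summand X A B"
    unfolding summand_def eqpoll_def
    by (rule exI[where x="\<lambda>(s, (p, e), q). (p, q, e, s)"],
        rule bij_betw_byWitness[where f'="\<lambda>(p, q, e, s). (s, (p, e), q)"]) auto
  finally show ?thesis .
qed

lemma equiv_eqpoll: "equiv UNIV {(B, C). B \<approx> C}"
  by (auto simp: equiv_def refl_on_def sym_def trans_def intro: eqpoll_sym eqpoll_trans)

lemma Sigma_eqpoll_Sigma_quotient:
  assumes R: "equiv U R" and "S \<subseteq> U"
  shows "Sigma S F \<approx> Sigma (S // R) (\<lambda>c. Sigma (c \<inter> S) F)"
proof -
  let ?tag = "\<lambda>(x, p). (R `` {x}, x, p)"
  have refl: "\<And>x. x \<in> U \<Longrightarrow> (x, x) \<in> R" using R by (auto dest: equiv_class_self)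
  have "bij_betw ?tag (Sigma S F) (Sigma (S // R) (\<lambda>c. Sigma (c \<inter> S) F))"
  proof (rule bij_betw_byWitness[where f'=snd])
    show "?tag ` Sigma S F \<subseteq> Sigma (S // R) (\<lambda>c. Sigma (c \<inter> S) F)"
      using assms(2) refl by (auto simp: quotientI)
    show "\<forall>q\<in>Sigma (S // R) (\<lambda>c. Sigma (c \<inter> S) F). ?tag (snd q) = q"
      using assms by (auto elim!: quotientE simp: equiv_class_eq_iff)
  qed auto
  then show ?thesis unfolding eqpoll_def by blast
qed

lemma subsets_of_size_some_class:
  assumes "c \<in> cards_upto A"
  shows "subsets_of_size A (SOME B. B \<in> c) = c \<inter> {C. C \<subseteq> A \<and> C \<noteq> {}}"
proof -
  obtain C0 where C0: "C0 \<subseteq> A" "C0 \<noteq> {}" and c: "c = {D. C0 \<approx> D}"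
    using assms by (auto simp: cards_upto_def quotient_def)
  have "(SOME B. B \<in> c) \<in> c" using c by (auto intro: someI[of _ C0])
  then have "C \<approx> (SOME B. B \<in> c) \<longleftrightarrow> C0 \<approx> C" for C
    using c by (auto intro: eqpoll_trans eqpoll_sym)
  then show ?thesis
    using c C0(2) by (auto simp: subsets_of_size_def dest: eqpoll_sym)
qed

theorem proposition5p15:
  fixes X A :: "'a set"
  assumes "X \<noteq> {}" and "A \<noteq> {}" and "A \<subseteq> X"
  shows "Reg (TXA X A) (Tcomp X) \<approx> reg_count_set X A"
proof -
  let ?S = "{C. C \<subseteq> A \<and> C \<noteq> {}}"
  let ?F = "\<lambda>C. surjections A C \<times> (X - A \<rightarrow>\<^sub>E C)"
  have "Reg (TXA X A) (Tcomp X) = {f \<in> X \<rightarrow>\<^sub>E A. f ` X = f ` A}"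
    using assms by (simp add: Reg_TXA_eq)
  also have "\<dots> \<approx> Sigma ?S ?F"
    using assms by (simp add: image_eq_maps_eqpoll_Sigma_surjections)
  also have "\<dots> \<approx> Sigma (cards_upto A) (\<lambda>c. Sigma (c \<inter> ?S) ?F)"
    unfolding cards_upto_def by (rule Sigma_eqpoll_Sigma_quotient[OF equiv_eqpoll]) simp
  also have "\<dots> = Sigma (cards_upto A) (\<lambda>c. Sigma (subsets_of_size A (SOME B. B \<in> c)) ?F)"
    by (simp add: subsets_of_size_some_class cong: Sigma_cong)
  also have "\<dots> \<approx> reg_count_set X A"
    unfolding reg_count_set_def
    by (rule Sigma_eqpoll_cong[where h=id]) (simp_all add: Sigma_subsets_of_size_eqpoll_summand)
  finally show ?thesis .
qed

end
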